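(* Let $\rho$ be a density matrix on $\mathbb{C}^d$ and $H$ a Hermitian operator on $\mathbb{C}^d$, and suppose $F_Q>0$. Then for every integer $n\ge 1$, $$\mathcal{E}_n^{(\mathsf{Kry})}\coloneqq\frac{\left|B_n^{(\mathsf{Kry})}-F_Q\right|}{F_Q}\le 4\left[\frac{\sqrt{\kappa(\rho)}-1}{\sqrt{\kappa(\rho)}+1}\right]^{2n},$$ where $\kappa(\rho)=p_{\max}/p_{\min}$ if $\rho$ is full rank and $\kappa(\rho)=2p_{\max}/p_{\min}$ otherwise, with $p_{\max}$ and $p_{\min}$ the largest and smallest nonzero eigenvalues of $\rho$. In particular, $\mathcal{E}_n^{(\mathsf{Kry})}$ decreases exponentially to zero as $n$ increases.
   Context: Write $\rho=\sum_k p_k|k\rangle\langle k|$ (spectral decomposition, orthonormal eigenbasis $\{|k\rangle\}$). The quantum Fisher information (QFI) of $\rho$ with respect to $H$ is $F_Q=2\sum_{k,l:\,p_k+p_l>0}\frac{(p_k-p_l)^2}{p_k+p_l}|\langle k|H|l\rangle|^2$. Let $\mathcal{X}$ be the real vector space of Hermitian operators $X$ with $\langle k|X|l\rangle=0$ whenever $p_k=p_l=0$, equipped with the inner product $\langle X,Y\rangle_\rho=\mathrm{tr}[\rho(XY+YX)/2]$ and norm $\|X\|_\rho=\sqrt{\langle X,X\rangle_\rho}$. Let $\mathcal{R}_\rho(X)=\frac12(\rho X+X\rho)$. The symmetric logarithmic derivative (SLD) $L$ is the unique $L\in\mathcal{X}$ with $\mathcal{R}_\rho(L)=i[\rho,H]$;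 one has $F_Q=\|L\|_\rho^2$. The Krylov subspace of order $n$ is $\mathcal{K}_n=\mathrm{span}\{i[\rho,H],\mathcal{R}_\rho(i[\rho,H]),\dots,\mathcal{R}_\rho^{n-1}(i[\rho,H])\}\subseteq\mathcal{X}$ (real span). Let $L_n\in\mathcal{K}_n$ be the element of $\mathcal{K}_n$ closest to $L$ in the norm $\|\cdot\|_\rho$ (i.e., the $\langle\cdot,\cdot\rangle_\rho$-orthogonal projection of $L$ onto $\mathcal{K}_n$). The $n$-th Krylov bound is $B_n^{(\mathsf{Kry})}=\|L_n\|_\rho^2$. *)

theory Defs
  imports "HOL-Analysis.Analysis"
begin

text \<open>Operators on C^d are represented as matrices complex^'n^'n, with d = CARD('n).\<close>

definition cadj :: "complex^'n^'n \<Rightarrow> complex^'n^'n" where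
  "cadj A = (\<chi> i j. cnj (A $ j $ i))"

definition hermitian_mat :: "complex^'n^'n \<Rightarrow> bool" where
  "hermitian_mat A \<longleftrightarrow> cadj A = A"

definition unitary_mat :: "complex^'n^'n \<Rightarrow> bool" where
  "unitary_mat U \<longleftrightarrow> cadj U ** U = mat 1 \<and> U ** cadj U = mat 1"

definition density_mat :: "complex^'n^'n \<Rightarrow> bool" where
  "density_mat \<rho> \<longleftrightarrow> hermitian_mat \<rho>
     \<and> (\<forall>v::complex^'n. let q = (\<Sum>i\<in>UNIV. cnj (v $ i) * (\<rho> *v v) $ i) in Im q = 0 \<and> Re q \<ge> 0)
     \<and> trace \<rho> = 1"

definition rdiag :: "('n \<Rightarrow> real) \<Rightarrow> complex^'n^'n" where
  "rdiag p = (\<chi> i j. if i = j then complex_of_real (p i) else 0)"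

text \<open>Spectral decomposition rho = sum_k p_k |k><k|, with |k> the k-th column of the unitary U.\<close>
definition spectral_decomp :: "complex^'n^'n \<Rightarrow> complex^'n^'n \<Rightarrow> ('n \<Rightarrow> real) \<Rightarrow> bool" where
  "spectral_decomp \<rho> U p \<longleftrightarrow> unitary_mat U \<and> \<rho> = U ** rdiag p ** cadj U"

text \<open>Matrix elements <k|X|l> in the eigenbasis given by U.\<close>
definition melem :: "complex^'n^'n \<Rightarrow> complex^'n^'n \<Rightarrow> 'n \<Rightarrow> 'n \<Rightarrow> complex" where
  "melem U X k l = (cadj U ** X ** U) $ k $ l"

definition QFI :: "complex^'n^'n \<Rightarrow> ('n \<Rightarrow> real) \<Rightarrow> complex^'n^'n \<Rightarrow> real" where
  "QFI U p H = 2 * (\<Sum>k\<in>UNIV. \<Sum>l\<in>UNIV.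
      if p k + p l > 0 then (p k - p l)^2 / (p k + p l) * (cmod (melem U H k l))^2 else 0)"

definition Xspace :: "complex^'n^'n \<Rightarrow> ('n \<Rightarrow> real) \<Rightarrow> (complex^'n^'n) set" where
  "Xspace U p = {X. hermitian_mat X \<and> (\<forall>k l. p k = 0 \<and> p l = 0 \<longrightarrow> melem U X k l = 0)}"

definition rho_inner :: "complex^'n^'n \<Rightarrow> complex^'n^'n \<Rightarrow> complex^'n^'n \<Rightarrow> real" where
  "rho_inner \<rho> X Y = Re (trace (\<rho> ** (X ** Y + Y ** X)) / 2)"

definition rho_norm :: "complex^'n^'n \<Rightarrow> complex^'n^'n \<Rightarrow> real" where
  "rho_norm \<rho> X = sqrt (rho_inner \<rho> X X)"

definition Rop :: "complex^'n^'n \<Rightarrow> complex^'n^'n \<Rightarrow> complex^'n^'n" where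
  "Rop \<rho> X = (1/2::real) *\<^sub>R (\<rho> ** X + X ** \<rho>)"

definition icomm :: "complex^'n^'n \<Rightarrow> complex^'n^'n \<Rightarrow> complex^'n^'n" where
  "icomm \<rho> H = (\<chi> i j. \<i> * (\<rho> ** H - H ** \<rho>) $ i $ j)"

definition SLD :: "complex^'n^'n \<Rightarrow> complex^'n^'n \<Rightarrow> ('n \<Rightarrow> real) \<Rightarrow> complex^'n^'n \<Rightarrow> complex^'n^'n" where
  "SLD \<rho> U p H = (THE L. L \<in> Xspace U p \<and> Rop \<rho> L = icomm \<rho> H)"

text \<open>Krylov subspace of order n (real span; span is the real-vector-space span).\<close>
definition krylov :: "complex^'n^'n \<Rightarrow> complex^'n^'n \<Rightarrow> nat \<Rightarrow> (complex^'n^'n) set" where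
  "krylov \<rho> H n = span ((\<lambda>j. (Rop \<rho> ^^ j) (icomm \<rho> H)) ` {..<n})"

definition krylov_proj :: "complex^'n^'n \<Rightarrow> complex^'n^'n \<Rightarrow> ('n \<Rightarrow> real) \<Rightarrow> complex^'n^'n \<Rightarrow> nat \<Rightarrow> complex^'n^'n" where
  "krylov_proj \<rho> U p H n = (THE Y. Y \<in> krylov \<rho> H n \<and>
      (\<forall>Z\<in>krylov \<rho> H n. rho_inner \<rho> (SLD \<rho> U p H - Y) Z = 0))"

definition krylov_bound :: "complex^'n^'n \<Rightarrow> complex^'n^'n \<Rightarrow> ('n \<Rightarrow> real) \<Rightarrow> complex^'n^'n \<Rightarrow> nat \<Rightarrow> real" where
  "krylov_bound \<rho> U p H n = (rho_norm \<rho> (krylov_proj \<rho> U p H n))^2"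

definition kappa :: "('n::finite \<Rightarrow> real) \<Rightarrow> real" where
  "kappa p = (let pmax = Max {p k | k. p k \<noteq> 0}; pmin = Min {p k | k. p k \<noteq> 0}
              in if (\<forall>k. p k \<noteq> 0) then pmax / pmin else 2 * pmax / pmin)"

end

theory Submission
  imports Defs "HOL-Computational_Algebra.Polynomial"
begin

text \<open>In the eigenbasis of \<open>\<rho>\<close>, \<open>\<R>\<^sub>\<rho>\<close> multiplies the \<open>(k,l)\<close> entry by
  \<open>w\<^sub>k\<^sub>l = (p\<^sub>k + p\<^sub>l)/2\<close>, and \<open>i[\<rho>,H] = \<R>\<^sub>\<rho>(L)\<close>. Hence for every polynomial \<open>q\<close> of degree
  \<open>< n\<close> the Krylov space \<open>\<K>\<^sub>n\<close> contains the operator with entries \<open>w\<^sub>k\<^sub>l q(w\<^sub>k\<^sub>l) L\<^sub>k\<^sub>l\<close>, whose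
  distance to \<open>L\<close> satisfies \<open>\<parallel>L - Y\<parallel>\<^sub>\<rho>\<^sup>2 = \<Sum> p\<^sub>k |1 - w\<^sub>k\<^sub>l q(w\<^sub>k\<^sub>l)|\<^sup>2 |L\<^sub>k\<^sub>l|\<^sup>2\<close>. Only entries with
  \<open>p\<^sub>k > 0\<close> count, and for those \<open>w\<^sub>k\<^sub>l\<close> lies in \<open>[p\<^sub>m\<^sub>i\<^sub>n, p\<^sub>m\<^sub>a\<^sub>x]\<close>, or in
  \<open>[p\<^sub>m\<^sub>i\<^sub>n/2, p\<^sub>m\<^sub>a\<^sub>x]\<close> when \<open>\<rho>\<close> is singular (whence the 2 in \<open>\<kappa>\<close>). A rescaled Chebyshev
  polynomial makes \<open>|1 - x q(x)| \<le> 2 r\<^sup>n\<close> on that interval, \<open>r = (\<surd>\<kappa> - 1)/(\<surd>\<kappa> + 1)\<close>, so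
  \<open>\<parallel>L - Y\<parallel>\<^sub>\<rho>\<^sup>2 \<le> 4 r\<^sup>2\<^sup>n F\<^sub>Q\<close>. Finally \<open>L\<^sub>n\<close> is the \<open>\<rho>\<close>-orthogonal projection of \<open>L\<close>, so
  \<open>0 \<le> F\<^sub>Q - B\<^sub>n = \<parallel>L - L\<^sub>n\<parallel>\<^sub>\<rho>\<^sup>2 \<le> \<parallel>L - Y\<parallel>\<^sub>\<rho>\<^sup>2\<close>.\<close>

section \<open>Chebyshev polynomials\<close>

fun chebyshev_poly :: "nat \<Rightarrow> real poly" where
  "chebyshev_poly 0 = 1"
| "chebyshev_poly (Suc 0) = [:0, 1:]"
| "chebyshev_poly (Suc (Suc n)) = [:0, 2:] * chebyshev_poly (Suc n) - chebyshev_poly n"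

lemma degree_chebyshev_poly_le: "degree (chebyshev_poly n) \<le> n"
proof (induction n rule: chebyshev_poly.induct)
  case (3 n)
  have "degree ([:0, 2:] * chebyshev_poly (Suc n)) \<le> Suc (Suc n)"
    using degree_mult_le[of "[:0, 2:]" "chebyshev_poly (Suc n)"] 3 by simp
  then show ?case
    using 3 degree_diff_le by (metis chebyshev_poly.simps(3) le_Suc_eq)
qed auto

lemma poly_chebyshev_poly_cos: "poly (chebyshev_poly n) (cos t) = cos (real n * t)"
proof (induction n rule: chebyshev_poly.induct)
  case (3 n)
  have "real (Suc (Suc n)) * t = real (Suc n) * t + t" "real n * t = real (Suc n) * t - t"
    by (simp_all add: algebra_simps)
  then have "cos (real (Suc (Suc n)) * t) = 2 * cos t * cos (real (Suc n) * t) - cos (real n * t)"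
    by (simp only: cos_add cos_diff) simp
  then show ?case using 3 by simp
qed auto

lemma abs_poly_chebyshev_poly_le_1:
  assumes "\<bar>y\<bar> \<le> 1"
  shows "\<bar>poly (chebyshev_poly n) y\<bar> \<le> 1"
  using poly_chebyshev_poly_cos[of n "arccos y"] assms by (simp add: cos_arccos_abs)

lemma poly_chebyshev_poly_joukowski:
  assumes "z \<noteq> 0"
  shows "poly (chebyshev_poly n) ((z + inverse z) / 2) = (z ^ n + inverse z ^ n) / 2"
proof (induction n rule: chebyshev_poly.induct)
  case (3 n)
  let ?y = "(z + inverse z) / 2"
  have "poly (chebyshev_poly (Suc (Suc n))) ?y
        = (z + inverse z) * poly (chebyshev_poly (Suc n)) ?y - poly (chebyshev_poly n) ?y"
    by simp
  also have "\<dots> = (z + inverse z) * ((z ^ Suc n + inverse z ^ Suc n) / 2) - (z ^ n + inverse z ^ n) / 2"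
    by (simp only: 3)
  also have "\<dots> = (z ^ Suc (Suc n) + inverse z ^ Suc (Suc n)) / 2"
    using assms by (simp add: field_simps)
  finally show ?case .
qed auto

text \<open>The rescaled Chebyshev polynomial \<open>T\<^sub>n((b + a - 2x)/(b - a)) / T\<^sub>n((b + a)/(b - a))\<close>;
  the denominator is evaluated through \<open>(b + a)/(b - a) = (z + z\<inverse>)/2\<close> with
  \<open>z = (\<surd>(b/a) + 1)/(\<surd>(b/a) - 1)\<close>.\<close>
lemma rescaled_chebyshev_bound:
  fixes a b :: real
  assumes "0 < a" "a < b"
  obtains S where "degree S \<le> n" "poly S 0 = 1"
    "\<And>x. x \<in> {a..b} \<Longrightarrow> \<bar>poly S x\<bar> \<le> 2 * ((sqrt (b/a) - 1) / (sqrt (b/a) + 1)) ^ n"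
proof -
  define s where "s = sqrt (b/a)"
  have s1: "s > 1" and s2: "s\<^sup>2 = b/a"
    unfolding s_def using assms by simp_all
  define z where "z = (s + 1) / (s - 1)"
  have z1: "z > 1"
    unfolding z_def using s1 by (simp add: field_simps)
  have iz: "inverse z = (s - 1) / (s + 1)"
    unfolding z_def by simp
  define \<sigma> where "\<sigma> = (b + a) / (b - a)"
  have "(z + inverse z) / 2 = ((s + 1) * (s + 1) + (s - 1) * (s - 1)) / (2 * ((s + 1) * (s - 1)))"
    unfolding iz unfolding z_def using s1 by (simp add: field_simps)
  also have "\<dots> = (s\<^sup>2 + 1) / (s\<^sup>2 - 1)"
    using less_1_mult[OF s1 s1] by (simp add: field_simps power2_eq_square)
  also have "\<dots> = \<sigma>"
    unfolding s2 \<sigma>_def using assms by (simp add: field_simps)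
  finally have z\<sigma>: "(z + inverse z) / 2 = \<sigma>" .
  define T where "T = poly (chebyshev_poly n) \<sigma>"
  have T: "T = (z ^ n + inverse z ^ n) / 2"
    unfolding T_def z\<sigma>[symmetric] using z1 by (intro poly_chebyshev_poly_joukowski) auto
  have T_pos: "T > 0"
    unfolding T using z1 by (simp add: add_pos_pos)
  have "1 / T \<le> 1 / (z ^ n / 2)"
    using T_pos z1 unfolding T by (intro divide_left_mono) auto
  also have "\<dots> = 2 * inverse z ^ n"
    by (simp add: power_inverse field_simps)
  finally have inv_T: "1 / T \<le> 2 * inverse z ^ n" .
  define S where "S = smult (1 / T) (pcompose (chebyshev_poly n) [:\<sigma>, -2 / (b - a):])"
  show thesis
  proof
    show "degree S \<le> n"
      unfolding S_def degree_smult_eq degree_pcompose using degree_chebyshev_poly_le[of n]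
      by (simp add: mult_le_one)
    show "poly S 0 = 1"
      unfolding S_def using T_pos by (simp add: poly_pcompose T_def)
  next
    fix x assume x: "x \<in> {a..b}"
    have y: "\<bar>\<sigma> - 2 * x / (b - a)\<bar> \<le> 1"
    proof -
      have "\<sigma> - 2 * x / (b - a) = (b + a - 2 * x) / (b - a)"
        unfolding \<sigma>_def using assms by (simp add: diff_divide_distrib)
      then show ?thesis
        using x assms by (auto simp: divide_le_eq le_divide_eq abs_le_iff)
    qed
    have "\<bar>poly S x\<bar> = \<bar>poly (chebyshev_poly n) (\<sigma> - 2 * x / (b - a))\<bar> / T"
      unfolding S_def using T_pos by (simp add: poly_pcompose mult.commute abs_mult)
    also have "\<dots> \<le> 1 / T"
      using abs_poly_chebyshev_poly_le_1[OF y] T_pos by (simp add: divide_right_mono)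
    also have "\<dots> \<le> 2 * inverse z ^ n"
      by (rule inv_T)
    finally show "\<bar>poly S x\<bar> \<le> 2 * ((sqrt (b/a) - 1) / (sqrt (b/a) + 1)) ^ n"
      unfolding iz s_def .
  qed
qed

lemma poly_eq_1_minus_x_mult:
  fixes S :: "'a::idom poly"
  assumes "poly S 0 = 1" "degree S \<le> n" "n \<ge> 1"
  obtains q where "degree q < n" "\<And>x. poly S x = 1 - x * poly q x"
proof -
  have "poly (1 - S) 0 = 0"
    using assms(1) by simp
  then obtain q where q: "1 - S = [:0, 1:] * q"
    using poly_eq_0_iff_dvd[of "1 - S" 0] by auto
  have "degree (1 - S) \<le> n"
    using degree_diff_le[of 1 n S] assms(2) by simp
  then have "degree q < n"
    using assms(3) unfolding q by (cases "q = 0") (auto simp: degree_mult_eq)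
  moreover have "poly S x = 1 - x * poly q x" for x
    using arg_cong[OF q, of "\<lambda>P. poly P x"] by (simp add: algebra_simps)
  ultimately show thesis ..
qed

lemma polynomial_residual_bound:
  fixes a b :: real
  assumes "0 < a" "a \<le> b" "n \<ge> 1"
  obtains q :: "real poly" where "degree q < n"
    "\<And>x. x \<in> {a..b} \<Longrightarrow> \<bar>1 - x * poly q x\<bar> \<le> 2 * ((sqrt (b/a) - 1) / (sqrt (b/a) + 1)) ^ n"
proof -
  obtain S where S: "degree S \<le> n" "poly S 0 = 1"
    "\<And>x. x \<in> {a..b} \<Longrightarrow> \<bar>poly S x\<bar> \<le> 2 * ((sqrt (b/a) - 1) / (sqrt (b/a) + 1)) ^ n"
  proof (cases "a = b")
    case True
    show thesis
      by (rule that[of "[:1, -1 / a:]"]) (use True assms in auto)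
  next
    case False
    then show thesis
      using rescaled_chebyshev_bound[of a b n] assms that by auto
  qed
  obtain q where "degree q < n" "\<And>x. poly S x = 1 - x * poly q x"
    using poly_eq_1_minus_x_mult[OF S(2,1) assms(3)] by blast
  then show thesis
    using that S(3) by metis
qed

section \<open>Matrix elements in the eigenbasis of \<open>\<rho>\<close>\<close>

lemma cadj_mult: "cadj (A ** B) = cadj B ** cadj (A::complex^'n^'n)"
  unfolding vec_eq_iff cadj_def matrix_matrix_mult_def by (simp add: mult.commute)

lemma cadj_cadj [simp]: "cadj (cadj A) = A"
  by (simp add: cadj_def vec_eq_iff)

lemma matrix_mult3_nth:
  "((A::complex^'n^'n) ** B ** C) $ i $ j = (\<Sum>a\<in>UNIV. \<Sum>b\<in>UNIV. A$i$a * B$a$b * C$b$j)"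
proof -
  have "(A ** B ** C) $ i $ j = (\<Sum>b\<in>UNIV. \<Sum>a\<in>UNIV. A$i$a * B$a$b * C$b$j)"
    by (simp add: matrix_matrix_mult_def sum_distrib_right)
  also have "\<dots> = (\<Sum>a\<in>UNIV. \<Sum>b\<in>UNIV. A$i$a * B$a$b * C$b$j)"
    by (rule sum.swap)
  finally show ?thesis .
qed

lemma unitary_conj_mult:
  assumes "unitary_mat U"
  shows "cadj U ** (A ** B) ** U = (cadj U ** A ** U) ** (cadj U ** B ** U)"
proof -
  have "(cadj U ** A ** U) ** (cadj U ** B ** U) = cadj U ** A ** (U ** cadj U) ** B ** U"
    by (simp add: matrix_mul_assoc)
  also have "\<dots> = cadj U ** (A ** B) ** U"
    using assms by (simp add: unitary_mat_def matrix_mul_assoc)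
  finally show ?thesis
    by simp
qed

lemma unitary_conj_cancel:
  assumes "unitary_mat U"
  shows "U ** (cadj U ** X ** U) ** cadj U = X"
    and "cadj U ** (U ** X ** cadj U) ** U = X"
proof -
  have "U ** (cadj U ** X ** U) ** cadj U = (U ** cadj U) ** X ** (U ** cadj U)"
    and "cadj U ** (U ** X ** cadj U) ** U = (cadj U ** U) ** X ** (cadj U ** U)"
    by (simp_all add: matrix_mul_assoc)
  then show "U ** (cadj U ** X ** U) ** cadj U = X" "cadj U ** (U ** X ** cadj U) ** U = X"
    using assms by (simp_all add: unitary_mat_def)
qed

lemma trace_unitary_conj:
  assumes "unitary_mat U"
  shows "trace (cadj U ** M ** U) = trace M"
proof -
  have "trace ((cadj U ** M) ** U) = trace (U ** (cadj U ** M))"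
    by (rule trace_mul_sym)
  also have "\<dots> = trace ((U ** cadj U) ** M)"
    by (simp add: matrix_mul_assoc)
  finally show ?thesis
    using assms by (simp add: unitary_mat_def)
qed

lemma spectral_decomp_unitary: "spectral_decomp \<rho> U p \<Longrightarrow> unitary_mat U"
  by (simp add: spectral_decomp_def)

lemma spectral_decomp_diag:
  assumes "spectral_decomp \<rho> U p"
  shows "cadj U ** \<rho> ** U = rdiag p"
  using assms unitary_conj_cancel(2)[of U "rdiag p"] by (simp add: spectral_decomp_def)

lemma melem_add: "melem U (X + Y) k l = melem U X k l + melem U Y k l"
  by (simp add: melem_def matrix_mult3_nth distrib_left distrib_right sum.distrib)

lemma melem_diff: "melem U (X - Y) k l = melem U X k l - melem U Y k l"
  by (simp add: melem_def matrix_mult3_nth algebra_simps sum_subtractf)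

lemma melem_scaleR: "melem U (c *\<^sub>R X) k l = c *\<^sub>R melem U X k l"
  by (simp add: melem_def matrix_scalar_ac scalar_matrix_assoc[symmetric])

lemma melem_zero [simp]: "melem U 0 k l = 0"
  by (simp add: melem_def)

lemma melem_sum: "melem U (sum f S) k l = (\<Sum>x\<in>S. melem U (f x) k l)"
  by (induction S rule: infinite_finite_induct) (simp_all add: melem_add)

lemma melem_cmult: "melem U (\<chi> i j. c * A $ i $ j) k l = c * melem U A k l"
  by (simp add: melem_def matrix_mult3_nth sum_distrib_left algebra_simps)

lemma melem_mult:
  assumes "unitary_mat U"
  shows "melem U (A ** B) k l = ((cadj U ** A ** U) ** (cadj U ** B ** U)) $ k $ l"
  using unitary_conj_mult[OF assms] by (simp add: melem_def)

lemma melem_unitary_conj: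
  assumes "unitary_mat U"
  shows "melem U (U ** M ** cadj U) k l = M $ k $ l"
  unfolding melem_def unitary_conj_cancel(2)[OF assms] ..

lemma melem_eqI:
  assumes "unitary_mat U" "\<And>k l. melem U X k l = melem U Y k l"
  shows "X = Y"
proof -
  have "cadj U ** X ** U = cadj U ** Y ** U"
    using assms(2) unfolding melem_def vec_eq_iff by blast
  then show ?thesis
    using unitary_conj_cancel(1)[OF assms(1)] by metis
qed

lemma melem_rho_mult:
  assumes "spectral_decomp \<rho> U p"
  shows "melem U (\<rho> ** X) k l = of_real (p k) * melem U X k l"
    and "melem U (X ** \<rho>) k l = melem U X k l * of_real (p l)"
  unfolding melem_mult[OF spectral_decomp_unitary[OF assms]] spectral_decomp_diag[OF assms]
  by (simp_all add: melem_def rdiag_def matrix_matrix_mult_def if_distrib if_distribR cong: if_cong)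

lemma melem_Rop:
  assumes "spectral_decomp \<rho> U p"
  shows "melem U (Rop \<rho> X) k l = of_real ((p k + p l) / 2) * melem U X k l"
proof -
  have "melem U (Rop \<rho> X) k l = (1/2::real) *\<^sub>R (melem U (\<rho> ** X) k l + melem U (X ** \<rho>) k l)"
    by (simp add: Rop_def melem_scaleR melem_add)
  then show ?thesis
    by (simp add: melem_rho_mult[OF assms] scaleR_conv_of_real algebra_simps)
qed

lemma melem_icomm:
  assumes "spectral_decomp \<rho> U p"
  shows "melem U (icomm \<rho> H) k l = \<i> * of_real (p k - p l) * melem U H k l"
  unfolding icomm_def melem_cmult melem_diff melem_rho_mult[OF assms] by (simp add: algebra_simps)

lemma hermitian_mat_iff_melem:
  assumes "unitary_mat U"
  shows "hermitian_mat X \<longleftrightarrow> (\<forall>k l. melem U X l k = cnj (melem U X k l))"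
proof -
  have conj: "cadj (cadj U ** X ** U) = cadj U ** cadj X ** U"
    by (simp add: cadj_mult matrix_mul_assoc)
  have "hermitian_mat X \<longleftrightarrow> cadj U ** cadj X ** U = cadj U ** X ** U"
    unfolding hermitian_mat_def
    using unitary_conj_cancel(1)[OF assms, of X] unitary_conj_cancel(1)[OF assms, of "cadj X"]
    by metis
  also have "\<dots> \<longleftrightarrow> (\<forall>k l. cnj (melem U X k l) = melem U X l k)"
    unfolding conj[symmetric] by (simp add: vec_eq_iff cadj_def melem_def) blast
  finally show ?thesis
    by metis
qed

lemma density_mat_eigenvalues_nonneg:
  assumes "density_mat \<rho>" "spectral_decomp \<rho> U p"
  shows "p k \<ge> 0"
proof -
  define v where "v = (\<chi> i. U $ i $ k)"
  have "melem U \<rho> k k = of_real (p k)"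
    unfolding melem_def spectral_decomp_diag[OF assms(2)] by (simp add: rdiag_def)
  moreover have "melem U \<rho> k k = (\<Sum>i\<in>UNIV. cnj (v $ i) * (\<rho> *v v) $ i)"
    unfolding melem_def matrix_mult3_nth v_def
    by (simp add: matrix_vector_mult_def cadj_def sum_distrib_left mult.assoc)
  moreover have "Re (\<Sum>i\<in>UNIV. cnj (v $ i) * (\<rho> *v v) $ i) \<ge> 0"
    using assms(1) unfolding density_mat_def Let_def by blast
  ultimately show ?thesis
    by simp
qed

section \<open>The operator space and the \<open>\<rho>\<close>-inner product\<close>

lemma Xspace_iff_melem:
  assumes "unitary_mat U"
  shows "X \<in> Xspace U p \<longleftrightarrow> (\<forall>k l. melem U X l k = cnj (melem U X k l))
     \<and> (\<forall>k l. p k = 0 \<and> p l = 0 \<longrightarrow> melem U X k l = 0)"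
  unfolding Xspace_def using hermitian_mat_iff_melem[OF assms] by blast

lemma Xspace_hermitian: "X \<in> Xspace U p \<Longrightarrow> hermitian_mat X"
  by (simp add: Xspace_def)

lemma subspace_Xspace:
  assumes "unitary_mat U"
  shows "subspace (Xspace U p)"
  unfolding subspace_def
proof (intro conjI ballI allI)
  fix X Y and c :: real
  assume "X \<in> Xspace U p" "Y \<in> Xspace U p"
  then have X: "melem U X l k = cnj (melem U X k l)" "p k = 0 \<and> p l = 0 \<longrightarrow> melem U X k l = 0"
    and Y: "melem U Y l k = cnj (melem U Y k l)" "p k = 0 \<and> p l = 0 \<longrightarrow> melem U Y k l = 0" for k l
    unfolding Xspace_iff_melem[OF assms] by blast+
  show "X + Y \<in> Xspace U p"
    unfolding Xspace_iff_melem[OF assms] melem_add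
  proof (intro conjI allI impI)
    fix k l
    show "melem U X l k + melem U Y l k = cnj (melem U X k l + melem U Y k l)"
      by (simp only: X(1)[of l k] Y(1)[of l k] complex_cnj_add)
  qed (use X(2) Y(2) in simp)
  show "c *\<^sub>R X \<in> Xspace U p"
    unfolding Xspace_iff_melem[OF assms] melem_scaleR
  proof (intro conjI allI impI)
    fix k l
    show "c *\<^sub>R melem U X l k = cnj (c *\<^sub>R melem U X k l)"
      by (simp only: X(1)[of l k] complex_cnj_scaleR)
  qed (use X(2) in simp)
qed (simp add: Xspace_iff_melem[OF assms])

lemma Rop_mem_Xspace:
  assumes "spectral_decomp \<rho> U p" "X \<in> Xspace U p"
  shows "Rop \<rho> X \<in> Xspace U p"
proof -
  have u: "unitary_mat U"
    using spectral_decomp_unitary[OF assms(1)] .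
  have X: "melem U X l k = cnj (melem U X k l)" "p k = 0 \<and> p l = 0 \<longrightarrow> melem U X k l = 0" for k l
    using assms(2) unfolding Xspace_iff_melem[OF u] by blast+
  show ?thesis
    unfolding Xspace_iff_melem[OF u] melem_Rop[OF assms(1)]
  proof (intro conjI allI impI)
    fix k l
    show "of_real ((p l + p k) / 2) * melem U X l k = cnj (of_real ((p k + p l) / 2) * melem U X k l)"
      by (simp only: X(1)[of l k] complex_cnj_mult complex_cnj_complex_of_real add.commute)
  qed (use X(2) in simp)
qed

lemma icomm_mem_Xspace:
  assumes "spectral_decomp \<rho> U p" "hermitian_mat H"
  shows "icomm \<rho> H \<in> Xspace U p"
proof -
  have u: "unitary_mat U"
    using spectral_decomp_unitary[OF assms(1)] .
  have H: "melem U H l k = cnj (melem U H k l)" for k l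
    using assms(2) hermitian_mat_iff_melem[OF u] by blast
  show ?thesis
    unfolding Xspace_iff_melem[OF u] melem_icomm[OF assms(1)]
  proof (intro conjI allI impI)
    fix k l
    show "\<i> * of_real (p l - p k) * melem U H l k = cnj (\<i> * of_real (p k - p l) * melem U H k l)"
      unfolding H[of k l] by (simp add: algebra_simps)
  qed simp
qed

lemma krylov_subset_Xspace:
  assumes "spectral_decomp \<rho> U p" "hermitian_mat H"
  shows "krylov \<rho> H n \<subseteq> Xspace U p"
proof -
  have gen: "(Rop \<rho> ^^ j) (icomm \<rho> H) \<in> Xspace U p" for j
    by (induction j) (simp_all add: icomm_mem_Xspace[OF assms] Rop_mem_Xspace[OF assms(1)])
  show ?thesis
    unfolding krylov_def
    by (rule span_minimal) (use gen subspace_Xspace[OF spectral_decomp_unitary[OF assms(1)]] in auto)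
qed

text \<open>On Hermitian operators \<open>\<langle>X, Y\<rangle>\<^sub>\<rho>\<close> is the Euclidean inner product of these coordinates,
  so orthogonal projections can be taken in a \<open>euclidean_space\<close>.\<close>
definition rho_coords :: "complex^'n^'n \<Rightarrow> ('n \<Rightarrow> real) \<Rightarrow> complex^'n^'n \<Rightarrow> complex^('n \<times> 'n)" where
  "rho_coords U p X = (\<chi> kl. sqrt (p (fst kl)) *\<^sub>R melem U X (fst kl) (snd kl))"

lemma linear_rho_coords: "linear (rho_coords U p)"
  by (rule linearI) (simp_all add: rho_coords_def vec_eq_iff melem_add melem_scaleR algebra_simps)

lemma inner_rho_coords:
  fixes p :: "'n::finite \<Rightarrow> real"
  assumes "\<And>k. p k \<ge> 0"
  shows "rho_coords U p X \<bullet> rho_coords U p Y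
    = (\<Sum>k\<in>UNIV. \<Sum>l\<in>UNIV. p k * Re (melem U X k l * cnj (melem U Y k l)))"
proof -
  have "rho_coords U p X \<bullet> rho_coords U p Y
      = (\<Sum>kl\<in>UNIV. p (fst kl) * Re (melem U X (fst kl) (snd kl) * cnj (melem U Y (fst kl) (snd kl))))"
    unfolding inner_vec_def rho_coords_def
  proof (intro sum.cong refl)
    fix kl :: "'n \<times> 'n"
    have "(c *\<^sub>R x) \<bullet> (c *\<^sub>R y) = (c * c) * Re (x * cnj y)" for c and x y :: complex
      by (simp add: inner_complex_def algebra_simps)
    moreover have "sqrt (p (fst kl)) * sqrt (p (fst kl)) = p (fst kl)"
      using assms by simp
    ultimately show "(\<chi> kl. sqrt (p (fst kl)) *\<^sub>R melem U X (fst kl) (snd kl)) $ kl \<bullet>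
          (\<chi> kl. sqrt (p (fst kl)) *\<^sub>R melem U Y (fst kl) (snd kl)) $ kl =
          p (fst kl) * Re (melem U X (fst kl) (snd kl) * cnj (melem U Y (fst kl) (snd kl)))"
      by (simp only: vec_lambda_beta)
  qed
  also have "\<dots> = (\<Sum>k\<in>UNIV. \<Sum>l\<in>UNIV. p k * Re (melem U X k l * cnj (melem U Y k l)))"
    by (simp add: sum.cartesian_product split_def flip: UNIV_Times_UNIV)
  finally show ?thesis .
qed

lemma rho_inner_eq_inner_rho_coords:
  assumes "density_mat \<rho>" "spectral_decomp \<rho> U p" "hermitian_mat X" "hermitian_mat Y"
  shows "rho_inner \<rho> X Y = rho_coords U p X \<bullet> rho_coords U p Y"
proof -
  have u: "unitary_mat U"
    using spectral_decomp_unitary[OF assms(2)] .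
  have hX: "melem U X l k = cnj (melem U X k l)" and hY: "melem U Y l k = cnj (melem U Y k l)" for k l
    using assms(3,4) hermitian_mat_iff_melem[OF u] by blast+
  have "trace (\<rho> ** (X ** Y + Y ** X)) = trace (cadj U ** (\<rho> ** (X ** Y + Y ** X)) ** U)"
    using trace_unitary_conj[OF u] by simp
  also have "\<dots> = (\<Sum>k\<in>UNIV. melem U (\<rho> ** (X ** Y + Y ** X)) k k)"
    by (simp add: trace_def melem_def)
  also have "\<dots> = (\<Sum>k\<in>UNIV. of_real (p k) * (\<Sum>l\<in>UNIV.
        melem U X k l * melem U Y l k + melem U Y k l * melem U X l k))"
    unfolding melem_rho_mult(1)[OF assms(2)] unfolding melem_add unfolding melem_mult[OF u]
    by (simp add: matrix_matrix_mult_def melem_def sum.distrib)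
  also have "\<dots> = (\<Sum>k\<in>UNIV. of_real (p k) * (\<Sum>l\<in>UNIV.
        melem U X k l * cnj (melem U Y k l) + cnj (melem U X k l * cnj (melem U Y k l))))"
  proof (intro sum.cong refl arg_cong2[where f="(*)"])
    fix k l
    show "melem U X k l * melem U Y l k + melem U Y k l * melem U X l k
      = melem U X k l * cnj (melem U Y k l) + cnj (melem U X k l * cnj (melem U Y k l))"
      by (simp only: hX[of k l] hY[of k l] complex_cnj_mult complex_cnj_cnj mult.commute)
  qed
  finally have trace_eq: "trace (\<rho> ** (X ** Y + Y ** X)) = \<dots>" .
  have "rho_inner \<rho> X Y
      = (\<Sum>k\<in>UNIV. p k * (\<Sum>l\<in>UNIV. Re (melem U X k l * cnj (melem U Y k l))))"
    unfolding rho_inner_def trace_eq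
    by (simp add: Re_sum sum_divide_distrib sum_distrib_left, intro sum.cong refl, simp add: field_simps)
  also have "\<dots> = rho_coords U p X \<bullet> rho_coords U p Y"
    using inner_rho_coords[of p U X Y] density_mat_eigenvalues_nonneg[OF assms(1,2)]
    by (simp add: sum_distrib_left)
  finally show ?thesis .
qed

lemma rho_inner_self:
  assumes "density_mat \<rho>" "spectral_decomp \<rho> U p" "hermitian_mat X"
  shows "rho_inner \<rho> X X = (\<Sum>k\<in>UNIV. \<Sum>l\<in>UNIV. p k * (cmod (melem U X k l))\<^sup>2)"
  unfolding rho_inner_eq_inner_rho_coords[OF assms assms(3)]
    inner_rho_coords[OF density_mat_eigenvalues_nonneg[OF assms(1,2)]]
  by (simp add: complex_norm_square[symmetric] del: of_real_power)

lemma rho_coords_eq_0_imp: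
  assumes "density_mat \<rho>" "spectral_decomp \<rho> U p" "X \<in> Xspace U p" "rho_coords U p X = 0"
  shows "X = 0"
proof (rule melem_eqI[OF spectral_decomp_unitary[OF assms(2)]])
  fix k l
  have u: "unitary_mat U"
    using spectral_decomp_unitary[OF assms(2)] .
  have pos: "p k > 0 \<Longrightarrow> melem U X k l = 0" for k l
    using arg_cong[OF assms(4), of "\<lambda>v. v $ (k, l)"] by (simp add: rho_coords_def)
  have "p k \<ge> 0" "p l \<ge> 0"
    using density_mat_eigenvalues_nonneg[OF assms(1,2)] by blast+
  moreover have "melem U X k l = cnj (melem U X l k)" "p k = 0 \<and> p l = 0 \<longrightarrow> melem U X k l = 0"
    using assms(3) unfolding Xspace_iff_melem[OF u] by (metis complex_cnj_cnj)+
  ultimately show "melem U X k l = melem U 0 k l"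
    using pos[of k l] pos[of l k] by (metis complex_cnj_zero less_eq_real_def melem_zero)
qed

section \<open>The symmetric logarithmic derivative\<close>

definition SLD_eigenbasis :: "complex^'n^'n \<Rightarrow> ('n \<Rightarrow> real) \<Rightarrow> complex^'n^'n \<Rightarrow> complex^'n^'n" where
  "SLD_eigenbasis U p H = (\<chi> k l. if p k + p l > 0
     then \<i> * of_real (2 * (p k - p l) / (p k + p l)) * melem U H k l else 0)"

lemma melem_icomm_eq_SLD_eigenbasis:
  assumes "density_mat \<rho>" "spectral_decomp \<rho> U p"
  shows "melem U (icomm \<rho> H) k l = of_real ((p k + p l) / 2) * SLD_eigenbasis U p H $ k $ l"
proof (cases "p k + p l > 0")
  case True
  define r where "r = 2 * (p k - p l) / (p k + p l)"
  have "(p k + p l) / 2 * r = p k - p l"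
    using True unfolding r_def by (simp add: field_simps)
  moreover have "SLD_eigenbasis U p H $ k $ l = \<i> * of_real r * melem U H k l"
    unfolding SLD_eigenbasis_def r_def using True by simp
  ultimately show ?thesis
    unfolding melem_icomm[OF assms(2)] by (metis mult.left_commute mult.assoc of_real_mult)
next
  case False
  then have "p k = 0" "p l = 0"
    using density_mat_eigenvalues_nonneg[OF assms, of k] density_mat_eigenvalues_nonneg[OF assms, of l]
    by auto
  then show ?thesis
    by (simp add: SLD_eigenbasis_def melem_icomm[OF assms(2)])
qed

text \<open>On the null block \<open>p\<^sub>k = p\<^sub>l = 0\<close> the equation \<open>\<R>\<^sub>\<rho>(X) = i[\<rho>,H]\<close> says nothing; this is
  why the SLD is only unique inside \<open>Xspace\<close>.\<close>
lemma Rop_eq_icomm_iff: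
  assumes "density_mat \<rho>" "spectral_decomp \<rho> U p" "X \<in> Xspace U p"
  shows "Rop \<rho> X = icomm \<rho> H \<longleftrightarrow> (\<forall>k l. melem U X k l = SLD_eigenbasis U p H $ k $ l)"
proof -
  have u: "unitary_mat U"
    using spectral_decomp_unitary[OF assms(2)] .
  have entry: "of_real ((p k + p l) / 2) * melem U X k l
      = of_real ((p k + p l) / 2) * SLD_eigenbasis U p H $ k $ l
    \<longleftrightarrow> melem U X k l = SLD_eigenbasis U p H $ k $ l" for k l
  proof (cases "p k + p l > 0")
    case False
    then have "p k = 0" "p l = 0"
      using density_mat_eigenvalues_nonneg[OF assms(1,2), of k]
        density_mat_eigenvalues_nonneg[OF assms(1,2), of l] by auto
    moreover have "p k = 0 \<and> p l = 0 \<longrightarrow> melem U X k l = 0"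
      using assms(3) unfolding Xspace_iff_melem[OF u] by blast
    ultimately show ?thesis
      by (simp add: SLD_eigenbasis_def)
  next
    case True
    then have "complex_of_real ((p k + p l) / 2) \<noteq> 0"
      by (simp only: of_real_eq_0_iff) simp
    then show ?thesis
      by (rule mult_left_cancel)
  qed
  have "Rop \<rho> X = icomm \<rho> H \<longleftrightarrow> (\<forall>k l. melem U (Rop \<rho> X) k l = melem U (icomm \<rho> H) k l)"
    using melem_eqI[OF u] by metis
  also have "\<dots> \<longleftrightarrow> (\<forall>k l. melem U X k l = SLD_eigenbasis U p H $ k $ l)"
    unfolding melem_Rop[OF assms(2)] melem_icomm_eq_SLD_eigenbasis[OF assms(1,2)] entry ..
  finally show ?thesis .
qed

lemma SLD_eq_SLD_eigenbasis:
  assumes "density_mat \<rho>" "spectral_decomp \<rho> U p" "hermitian_mat H"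
  shows "SLD \<rho> U p H \<in> Xspace U p" "melem U (SLD \<rho> U p H) k l = SLD_eigenbasis U p H $ k $ l"
proof -
  have u: "unitary_mat U"
    using spectral_decomp_unitary[OF assms(2)] .
  have H: "melem U H l k = cnj (melem U H k l)" for k l
    using assms(3) hermitian_mat_iff_melem[OF u] by blast
  define L where "L = U ** SLD_eigenbasis U p H ** cadj U"
  have L: "melem U L k l = SLD_eigenbasis U p H $ k $ l" for k l
    unfolding L_def melem_unitary_conj[OF u] ..
  have "L \<in> Xspace U p"
    unfolding Xspace_iff_melem[OF u] L
  proof (intro conjI allI impI)
    fix k l
    show "SLD_eigenbasis U p H $ l $ k = cnj (SLD_eigenbasis U p H $ k $ l)"
      by (simp add: SLD_eigenbasis_def H[of k l] algebra_simps divide_simps)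
  qed (simp add: SLD_eigenbasis_def)
  then have "SLD \<rho> U p H = L"
    unfolding SLD_def
    using Rop_eq_icomm_iff[OF assms(1,2)] L melem_eqI[OF u] by (intro the_equality) auto
  then show "SLD \<rho> U p H \<in> Xspace U p" "melem U (SLD \<rho> U p H) k l = SLD_eigenbasis U p H $ k $ l"
    using \<open>L \<in> Xspace U p\<close> L by simp_all
qed

lemma sum_sum_symmetric_weight:
  fixes f :: "'a \<Rightarrow> 'a \<Rightarrow> real"
  assumes "\<And>k l. f l k = f k l"
  shows "(\<Sum>k\<in>A. \<Sum>l\<in>A. w k * f k l) = (\<Sum>k\<in>A. \<Sum>l\<in>A. (w k + w l) / 2 * f k l)"
proof -
  have "(\<Sum>k\<in>A. \<Sum>l\<in>A. w k * f k l) = (\<Sum>k\<in>A. \<Sum>l\<in>A. w l * f k l)"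
    by (subst sum.swap) (simp add: assms)
  moreover have "(\<Sum>k\<in>A. \<Sum>l\<in>A. (w k + w l) / 2 * f k l)
      = ((\<Sum>k\<in>A. \<Sum>l\<in>A. w k * f k l) + (\<Sum>k\<in>A. \<Sum>l\<in>A. w l * f k l)) / 2"
    by (simp add: add_divide_distrib distrib_right sum.distrib sum_divide_distrib)
  ultimately show ?thesis
    by simp
qed

lemma QFI_eq_rho_inner_SLD:
  assumes "density_mat \<rho>" "spectral_decomp \<rho> U p" "hermitian_mat H"
  shows "QFI U p H = rho_inner \<rho> (SLD \<rho> U p H) (SLD \<rho> U p H)"
proof -
  have u: "unitary_mat U"
    using spectral_decomp_unitary[OF assms(2)] .
  let ?L = "SLD_eigenbasis U p H"
  have H: "cmod (melem U H l k) = cmod (melem U H k l)" for k l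
    using assms(3) hermitian_mat_iff_melem[OF u] by (metis complex_mod_cnj)
  have norm_L: "cmod (?L $ k $ l)
      = (if p k + p l > 0 then \<bar>2 * (p k - p l) / (p k + p l)\<bar> * cmod (melem U H k l) else 0)" for k l
    unfolding SLD_eigenbasis_def by (simp add: norm_mult del: of_real_mult of_real_divide of_real_diff)
  have sym: "(cmod (?L $ l $ k))\<^sup>2 = (cmod (?L $ k $ l))\<^sup>2" for k l
    unfolding norm_L H[of k l] by (simp add: add.commute abs_minus_commute)
  have weighted_entry: "(p k + p l) / 2 * (cmod (?L $ k $ l))\<^sup>2
      = 2 * (if p k + p l > 0 then (p k - p l)\<^sup>2 / (p k + p l) * (cmod (melem U H k l))\<^sup>2 else 0)"
    for k l
  proof -
    have scale: "s / 2 * (\<bar>2 * d / s\<bar> * c)\<^sup>2 = 2 * (d\<^sup>2 / s * c\<^sup>2)" if "s > 0" for s d c :: real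
      using that by (simp add: power_mult_distrib power2_abs power_divide power2_eq_square field_simps)
    show ?thesis
      unfolding norm_L using scale[of "p k + p l" "p k - p l" "cmod (melem U H k l)"] by simp
  qed
  have "rho_inner \<rho> (SLD \<rho> U p H) (SLD \<rho> U p H)
      = (\<Sum>k\<in>UNIV. \<Sum>l\<in>UNIV. p k * (cmod (?L $ k $ l))\<^sup>2)"
    unfolding rho_inner_self[OF assms(1,2) Xspace_hermitian[OF SLD_eq_SLD_eigenbasis(1)[OF assms]]]
      SLD_eq_SLD_eigenbasis[OF assms] ..
  also have "\<dots> = (\<Sum>k\<in>UNIV. \<Sum>l\<in>UNIV. (p k + p l) / 2 * (cmod (?L $ k $ l))\<^sup>2)"
    by (rule sum_sum_symmetric_weight) (rule sym)
  also have "\<dots> = QFI U p H"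
    unfolding weighted_entry QFI_def by (simp add: sum_distrib_left)
  finally show ?thesis ..
qed

section \<open>Krylov approximation of the SLD\<close>

lemma melem_krylov_generator:
  assumes "density_mat \<rho>" "spectral_decomp \<rho> U p"
  shows "melem U ((Rop \<rho> ^^ j) (icomm \<rho> H)) k l
    = of_real (((p k + p l) / 2) ^ Suc j) * SLD_eigenbasis U p H $ k $ l"
proof (induction j)
  case 0
  then show ?case
    using melem_icomm_eq_SLD_eigenbasis[OF assms] by simp
next
  case (Suc j)
  have "melem U ((Rop \<rho> ^^ Suc j) (icomm \<rho> H)) k l
      = of_real ((p k + p l) / 2) * melem U ((Rop \<rho> ^^ j) (icomm \<rho> H)) k l"
    by (simp only: funpow.simps o_apply melem_Rop[OF assms(2)])
  then show ?case
    unfolding Suc.IH by (simp only: power_Suc[of _ "Suc j"] of_real_mult mult.assoc)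
qed

lemma poly_eq_sum_lessThan:
  fixes q :: "'a::comm_semiring_1 poly"
  assumes "degree q < n"
  shows "poly q x = (\<Sum>j<n. coeff q j * x ^ j)"
proof -
  have "poly q x = (\<Sum>j\<le>degree q. coeff q j * x ^ j)"
    by (simp add: poly_altdef)
  also have "\<dots> = (\<Sum>j<n. coeff q j * x ^ j)"
    by (rule sum.mono_neutral_left) (use assms in \<open>auto simp: coeff_eq_0\<close>)
  finally show ?thesis .
qed

lemma krylov_polynomial_element:
  assumes "density_mat \<rho>" "spectral_decomp \<rho> U p" "degree q < n"
  obtains Y where "Y \<in> krylov \<rho> H n"
    "\<And>k l. melem U Y k l
      = of_real ((p k + p l) / 2 * poly q ((p k + p l) / 2)) * SLD_eigenbasis U p H $ k $ l"
proof
  define Y where "Y = (\<Sum>j<n. coeff q j *\<^sub>R (Rop \<rho> ^^ j) (icomm \<rho> H))"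
  show "Y \<in> krylov \<rho> H n"
    unfolding Y_def krylov_def by (intro span_sum span_scale span_base) auto
  fix k l
  show "melem U Y k l
      = of_real ((p k + p l) / 2 * poly q ((p k + p l) / 2)) * SLD_eigenbasis U p H $ k $ l"
    unfolding Y_def melem_sum melem_scaleR melem_krylov_generator[OF assms(1,2)]
      poly_eq_sum_lessThan[OF assms(3)]
    by (simp add: scaleR_conv_of_real sum_distrib_left sum_distrib_right algebra_simps)
qed

lemma inner_orthogonal_projection:
  fixes u v w :: "'a::real_inner"
  assumes "(u - v) \<bullet> v = 0" "(u - v) \<bullet> w = 0"
  shows "u \<bullet> u - v \<bullet> v = (u - v) \<bullet> (u - v)"
    and "(u - v) \<bullet> (u - v) \<le> (u - w) \<bullet> (u - w)"
proof -
  show "u \<bullet> u - v \<bullet> v = (u - v) \<bullet> (u - v)"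
    using assms(1) by (simp add: inner_diff inner_commute)
  have "(u - w) \<bullet> (u - w) = (u - v) \<bullet> (u - v) + (v - w) \<bullet> (v - w)"
    using assms by (simp add: inner_diff inner_commute algebra_simps)
  then show "(u - v) \<bullet> (u - v) \<le> (u - w) \<bullet> (u - w)"
    by simp
qed

lemma rho_projection_ex1:
  assumes "density_mat \<rho>" "spectral_decomp \<rho> U p"
    and "subspace K" "K \<subseteq> Xspace U p" "L \<in> Xspace U p"
  shows "\<exists>!Y. Y \<in> K \<and> (\<forall>Z\<in>K. rho_inner \<rho> (L - Y) Z = 0)"
proof -
  let ?c = "rho_coords U p"
  have sX: "subspace (Xspace U p)"
    using subspace_Xspace[OF spectral_decomp_unitary[OF assms(2)]] .
  have orth: "rho_inner \<rho> (L - Y) Z = (?c L - ?c Y) \<bullet> ?c Z" if "Y \<in> K" "Z \<in> K" for Y Z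
  proof -
    have "L - Y \<in> Xspace U p" "Z \<in> Xspace U p"
      using that assms(4,5) subspace_diff[OF sX] by auto
    then have "rho_inner \<rho> (L - Y) Z = ?c (L - Y) \<bullet> ?c Z"
      by (intro rho_inner_eq_inner_rho_coords[OF assms(1,2)] Xspace_hermitian)
    then show ?thesis
      by (simp only: linear_diff[OF linear_rho_coords])
  qed
  have span_image: "span (?c ` K) = ?c ` K"
    using span_linear_image[OF linear_rho_coords] span_eq_iff assms(3) by metis
  obtain y z where y: "y \<in> span (?c ` K)" and z: "\<And>w. w \<in> span (?c ` K) \<Longrightarrow> orthogonal z w"
    and yz: "?c L = y + z"
    using orthogonal_subspace_decomp_exists by blast
  obtain Y where Y: "Y \<in> K" "?c Y = y"
    using y unfolding span_image by auto
  show ?thesis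
  proof (rule ex1I)
    show "Y \<in> K \<and> (\<forall>Z\<in>K. rho_inner \<rho> (L - Y) Z = 0)"
      using Y z yz orth unfolding span_image orthogonal_def by auto
  next
    fix Y' assume Y': "Y' \<in> K \<and> (\<forall>Z\<in>K. rho_inner \<rho> (L - Y') Z = 0)"
    have D: "Y' - Y \<in> K"
      using Y' Y(1) subspace_diff[OF assms(3)] by blast
    then have "(?c L - ?c Y) \<bullet> ?c (Y' - Y) = 0" "(?c L - ?c Y') \<bullet> ?c (Y' - Y) = 0"
      using Y z yz orth Y' unfolding span_image orthogonal_def by auto
    then have "?c (Y' - Y) \<bullet> ?c (Y' - Y) = 0"
      by (simp add: linear_diff[OF linear_rho_coords] inner_diff_left)
    then have "Y' - Y = 0"
      using rho_coords_eq_0_imp[OF assms(1,2)] D assms(4) by (meson inner_eq_zero_iff subsetD)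
    then show "Y' = Y"
      by simp
  qed
qed

lemma krylov_proj_orthogonal:
  assumes "density_mat \<rho>" "spectral_decomp \<rho> U p" "hermitian_mat H"
  shows "krylov_proj \<rho> U p H n \<in> krylov \<rho> H n"
    and "\<forall>Z\<in>krylov \<rho> H n. rho_inner \<rho> (SLD \<rho> U p H - krylov_proj \<rho> U p H n) Z = 0"
proof -
  have "subspace (krylov \<rho> H n)"
    unfolding krylov_def by (rule subspace_span)
  from theI'[OF rho_projection_ex1[OF assms(1,2) this krylov_subset_Xspace[OF assms(2,3)]
      SLD_eq_SLD_eigenbasis(1)[OF assms]]]
  show "krylov_proj \<rho> U p H n \<in> krylov \<rho> H n"
    and "\<forall>Z\<in>krylov \<rho> H n. rho_inner \<rho> (SLD \<rho> U p H - krylov_proj \<rho> U p H n) Z = 0"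
    unfolding krylov_proj_def by blast+
qed

lemma rho_inner_self_nonneg:
  assumes "density_mat \<rho>" "spectral_decomp \<rho> U p" "hermitian_mat X"
  shows "rho_inner \<rho> X X \<ge> 0"
  unfolding rho_inner_self[OF assms]
  using density_mat_eigenvalues_nonneg[OF assms(1,2)] by (simp add: sum_nonneg)

lemma QFI_minus_krylov_bound:
  assumes "density_mat \<rho>" "spectral_decomp \<rho> U p" "hermitian_mat H" "Y \<in> krylov \<rho> H n"
  shows "0 \<le> QFI U p H - krylov_bound \<rho> U p H n"
    and "QFI U p H - krylov_bound \<rho> U p H n \<le> rho_inner \<rho> (SLD \<rho> U p H - Y) (SLD \<rho> U p H - Y)"
proof -
  let ?c = "rho_coords U p"
  define L where "L = SLD \<rho> U p H"
  define L\<^sub>n where "L\<^sub>n = krylov_proj \<rho> U p H n"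
  have sX: "subspace (Xspace U p)"
    using subspace_Xspace[OF spectral_decomp_unitary[OF assms(2)]] .
  have X: "L \<in> Xspace U p" "L\<^sub>n \<in> Xspace U p" "Y \<in> Xspace U p"
    using SLD_eq_SLD_eigenbasis(1)[OF assms(1-3)] krylov_proj_orthogonal(1)[OF assms(1-3)] assms(4)
      krylov_subset_Xspace[OF assms(2,3)]
    unfolding L_def L\<^sub>n_def by auto
  have coords: "rho_inner \<rho> A B = ?c A \<bullet> ?c B" if "A \<in> Xspace U p" "B \<in> Xspace U p" for A B
    using that by (intro rho_inner_eq_inner_rho_coords[OF assms(1,2)] Xspace_hermitian)
  have diff: "?c (A - B) = ?c A - ?c B" for A B
    by (rule linear_diff[OF linear_rho_coords])
  have "rho_inner \<rho> (L - L\<^sub>n) L\<^sub>n = 0" "rho_inner \<rho> (L - L\<^sub>n) Y = 0"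
    using krylov_proj_orthogonal[OF assms(1-3)] assms(4) unfolding L_def L\<^sub>n_def by blast+
  then have orth: "(?c L - ?c L\<^sub>n) \<bullet> ?c L\<^sub>n = 0" "(?c L - ?c L\<^sub>n) \<bullet> ?c Y = 0"
    using X subspace_diff[OF sX] by (simp_all add: coords diff)
  have "krylov_bound \<rho> U p H n = rho_inner \<rho> L\<^sub>n L\<^sub>n"
    unfolding krylov_bound_def rho_norm_def L\<^sub>n_def[symmetric]
    using rho_inner_self_nonneg[OF assms(1,2) Xspace_hermitian[OF X(2)]] by simp
  then have F_minus_B: "QFI U p H - krylov_bound \<rho> U p H n = (?c L - ?c L\<^sub>n) \<bullet> (?c L - ?c L\<^sub>n)"
    unfolding QFI_eq_rho_inner_SLD[OF assms(1-3), folded L_def]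
    using inner_orthogonal_projection(1)[OF orth] X by (simp add: coords)
  then show "0 \<le> QFI U p H - krylov_bound \<rho> U p H n"
    by simp
  show "QFI U p H - krylov_bound \<rho> U p H n \<le> rho_inner \<rho> (SLD \<rho> U p H - Y) (SLD \<rho> U p H - Y)"
    unfolding F_minus_B L_def[symmetric]
    using inner_orthogonal_projection(2)[OF orth] X subspace_diff[OF sX] by (simp add: coords diff)
qed

lemma rho_inner_residual_le:
  assumes "density_mat \<rho>" "spectral_decomp \<rho> U p" "hermitian_mat H" "Y \<in> Xspace U p"
    and "\<And>k l. melem U Y k l = of_real (f k l) * SLD_eigenbasis U p H $ k $ l"
    and "\<And>k l. p k > 0 \<Longrightarrow> \<bar>1 - f k l\<bar> \<le> M"
  shows "rho_inner \<rho> (SLD \<rho> U p H - Y) (SLD \<rho> U p H - Y) \<le> M\<^sup>2 * QFI U p H"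
proof -
  let ?L = "SLD_eigenbasis U p H"
  have pn: "p k \<ge> 0" for k
    using density_mat_eigenvalues_nonneg[OF assms(1,2)] .
  have herm: "hermitian_mat (SLD \<rho> U p H - Y)"
    using SLD_eq_SLD_eigenbasis(1)[OF assms(1-3)] assms(4)
      subspace_diff[OF subspace_Xspace[OF spectral_decomp_unitary[OF assms(2)]]] Xspace_hermitian
    by blast
  have QFI: "QFI U p H = (\<Sum>k\<in>UNIV. \<Sum>l\<in>UNIV. p k * (cmod (?L $ k $ l))\<^sup>2)"
    unfolding QFI_eq_rho_inner_SLD[OF assms(1-3)]
      rho_inner_self[OF assms(1,2) Xspace_hermitian[OF SLD_eq_SLD_eigenbasis(1)[OF assms(1-3)]]]
      SLD_eq_SLD_eigenbasis(2)[OF assms(1-3)] ..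
  have "p k * (cmod (melem U (SLD \<rho> U p H - Y) k l))\<^sup>2 \<le> M\<^sup>2 * (p k * (cmod (?L $ k $ l))\<^sup>2)" for k l
  proof (cases "p k > 0")
    case True
    have "(1 - f k l)\<^sup>2 \<le> M\<^sup>2"
      using power_mono[OF assms(6)[OF True] abs_ge_zero, where n=2] by (simp only: power2_abs)
    then have "(1 - f k l)\<^sup>2 * (p k * (cmod (?L $ k $ l))\<^sup>2) \<le> M\<^sup>2 * (p k * (cmod (?L $ k $ l))\<^sup>2)"
      using pn[of k] by (intro mult_right_mono) auto
    moreover have entry: "melem U (SLD \<rho> U p H - Y) k l = of_real (1 - f k l) * ?L $ k $ l"
      unfolding melem_diff SLD_eq_SLD_eigenbasis(2)[OF assms(1-3)] assms(5) by (simp add: algebra_simps)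
    ultimately show ?thesis
      unfolding entry norm_mult norm_of_real power_mult_distrib power2_abs by (simp add: algebra_simps)
  next
    case False
    then have "p k = 0"
      using pn[of k] by simp
    then show ?thesis
      by simp
  qed
  then show ?thesis
    unfolding rho_inner_self[OF assms(1,2) herm] QFI sum_distrib_left by (intro sum_mono)
qed

lemma kappa_eq_ratio:
  fixes p :: "'n::finite \<Rightarrow> real"
  assumes "\<And>k. p k \<ge> 0" "\<exists>k. p k \<noteq> 0"
  obtains a b where "0 < a" "a \<le> b" "kappa p = b / a"
    "\<And>k l. p k > 0 \<Longrightarrow> (p k + p l) / 2 \<in> {a..b}"
proof -
  define N where "N = {p k | k. p k \<noteq> 0}"
  have N: "finite N" "N \<noteq> {}"
    unfolding N_def using assms(2) finite_image_set[of "\<lambda>k. p k \<noteq> 0" p] by auto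
  have N_pos: "x \<in> N \<Longrightarrow> x > 0" for x
    unfolding N_def using assms(1) by (auto simp: order.order_iff_strict)
  define b where "b = Max N"
  define m where "m = Min N"
  define a where "a = (if \<forall>k. p k \<noteq> 0 then m else m / 2)"
  have "m \<in> N" "b \<in> N" "\<And>x. x \<in> N \<Longrightarrow> m \<le> x \<and> x \<le> b"
    unfolding m_def b_def using N by simp_all
  note m_b = this
  have "m > 0"
    using N_pos m_b(1) by blast
  show thesis
  proof
    show "0 < a"
      unfolding a_def using \<open>m > 0\<close> by simp
    show "a \<le> b"
      unfolding a_def using m_b(3)[OF m_b(2)] \<open>m > 0\<close> by auto
    show "kappa p = b / a"
      unfolding kappa_def Let_def a_def b_def m_def N_def by auto
  next
    fix k l assume "p k > 0"
    then have k: "p k \<in> N"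
      unfolding N_def by auto
    have l: "p l \<le> b" "(\<forall>k. p k \<noteq> 0) \<Longrightarrow> m \<le> p l"
      using m_b(2,3) N_pos[OF m_b(2)] unfolding N_def by (cases "p l = 0"; force)+
    show "(p k + p l) / 2 \<in> {a..b}"
      using m_b(3)[OF k] l assms(1)[of l] unfolding a_def by auto
  qed
qed

lemma QFI_pos_imp_eigenvalue_ne_0:
  assumes "QFI U p H > 0"
  shows "\<exists>k. p k \<noteq> 0"
proof (rule ccontr)
  assume "\<not> (\<exists>k. p k \<noteq> 0)"
  then have "QFI U p H = 0"
    by (simp add: QFI_def)
  then show False
    using assms by simp
qed

lemma one_le_kappa:
  fixes p :: "'n::finite \<Rightarrow> real"
  assumes "\<And>k. p k \<ge> 0" "\<exists>k. p k \<noteq> 0"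
  shows "1 \<le> kappa p"
  using kappa_eq_ratio[OF assms] by (metis le_divide_eq_1_pos)

lemma condition_number_rate_tendsto_0:
  fixes \<kappa> :: real
  assumes "1 \<le> \<kappa>"
  shows "(\<lambda>n. 4 * ((sqrt \<kappa> - 1) / (sqrt \<kappa> + 1)) ^ (2 * n)) \<longlonglongrightarrow> 0"
proof -
  define r where "r = (sqrt \<kappa> - 1) / (sqrt \<kappa> + 1)"
  have "0 \<le> r" "r < 1"
    unfolding r_def using assms by (simp_all add: divide_less_eq not_less)
  then have "\<bar>r\<^sup>2\<bar> < 1"
    by (simp add: abs_square_less_1)
  then show ?thesis
    unfolding r_def[symmetric] by (simp add: power_mult tendsto_mult_right_zero LIMSEQ_power_zero)
qed

lemma krylov_relative_error_le:
  fixes \<rho> H U :: "complex^'n^'n" and p :: "'n \<Rightarrow> real"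
  assumes "density_mat \<rho>" "hermitian_mat H" "spectral_decomp \<rho> U p" "QFI U p H > 0" "n \<ge> 1"
  shows "\<bar>krylov_bound \<rho> U p H n - QFI U p H\<bar> / QFI U p H
    \<le> 4 * ((sqrt (kappa p) - 1) / (sqrt (kappa p) + 1)) ^ (2 * n)"
proof -
  note hyps = assms(1,3,2)
  define L where "L = SLD \<rho> U p H"
  define M where "M = 2 * ((sqrt (kappa p) - 1) / (sqrt (kappa p) + 1)) ^ n"
  obtain a b where ab: "0 < a" "a \<le> b" "kappa p = b / a"
    and spectrum: "\<And>k l. p k > 0 \<Longrightarrow> (p k + p l) / 2 \<in> {a..b}"
    using kappa_eq_ratio density_mat_eigenvalues_nonneg[OF assms(1,3)]
      QFI_pos_imp_eigenvalue_ne_0[OF assms(4)] by metis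
  obtain q where "degree q < n" and q: "\<And>x. x \<in> {a..b} \<Longrightarrow> \<bar>1 - x * poly q x\<bar> \<le> M"
    using polynomial_residual_bound[OF ab(1,2) assms(5)] unfolding M_def ab(3) by blast
  obtain Y where Y: "Y \<in> krylov \<rho> H n" and Y_entries: "\<And>k l. melem U Y k l
      = of_real ((p k + p l) / 2 * poly q ((p k + p l) / 2)) * SLD_eigenbasis U p H $ k $ l"
    using krylov_polynomial_element[OF assms(1,3) \<open>degree q < n\<close>] by blast
  have "rho_inner \<rho> (L - Y) (L - Y) \<le> M\<^sup>2 * QFI U p H"
    unfolding L_def
  proof (rule rho_inner_residual_le[OF hyps _ Y_entries])
    show "Y \<in> Xspace U p"
      using Y krylov_subset_Xspace[OF assms(3,2)] by blast
    show "\<bar>1 - (p k + p l) / 2 * poly q ((p k + p l) / 2)\<bar> \<le> M" if "p k > 0" for k l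
      using q spectrum[OF that] by blast
  qed
  moreover note QFI_minus_krylov_bound[OF hyps Y, folded L_def]
  ultimately have "\<bar>krylov_bound \<rho> U p H n - QFI U p H\<bar> / QFI U p H \<le> M\<^sup>2"
    using assms(4) by (simp add: divide_le_eq)
  also have "M\<^sup>2 = 4 * ((sqrt (kappa p) - 1) / (sqrt (kappa p) + 1)) ^ (2 * n)"
    unfolding M_def by (simp add: power_mult_distrib power_mult[symmetric] mult.commute)
  finally show ?thesis .
qed

theorem theorem1:
  fixes \<rho> H U :: "complex^'n^'n" and p :: "'n \<Rightarrow> real"
  assumes "density_mat \<rho>"
    and "hermitian_mat H"
    and "spectral_decomp \<rho> U p"
    and "QFI U p H > 0"
  shows "(\<forall>n::nat. n \<ge> 1 \<longrightarrow>
           \<bar>krylov_bound \<rho> U p H n - QFI U p H\<bar> / QFI U p H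
             \<le> 4 * ((sqrt (kappa p) - 1) / (sqrt (kappa p) + 1)) ^ (2 * n))
         \<and> (\<lambda>n. \<bar>krylov_bound \<rho> U p H n - QFI U p H\<bar> / QFI U p H) \<longlonglongrightarrow> 0"
proof -
  let ?err = "\<lambda>n. \<bar>krylov_bound \<rho> U p H n - QFI U p H\<bar> / QFI U p H"
  let ?rate = "\<lambda>n. 4 * ((sqrt (kappa p) - 1) / (sqrt (kappa p) + 1)) ^ (2 * n)"
  have bound: "\<forall>n::nat. n \<ge> 1 \<longrightarrow> ?err n \<le> ?rate n"
    using krylov_relative_error_le[OF assms] by blast
  have "\<forall>\<^sub>F n in sequentially. norm (?err n) \<le> ?rate n"
    using bound assms(4) by (intro eventually_sequentiallyI[of 1]) simp
  moreover have "?rate \<longlonglongrightarrow> 0"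
    using condition_number_rate_tendsto_0 one_le_kappa density_mat_eigenvalues_nonneg[OF assms(1,3)]
      QFI_pos_imp_eigenvalue_ne_0[OF assms(4)] by blast
  ultimately have "?err \<longlonglongrightarrow> 0"
    by (rule Lim_null_comparison)
  with bound show ?thesis
    by blast
qed

end
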